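(* Let $R$ be a ring with unit. Let $\mathcal{Z} = (Z^-\xrightarrow{\zeta^-}Z\xleftarrow{\zeta^+}Z^+)$ and $\mathcal{Y}=(Y^-\xrightarrow{\upsilon^-}Y\xleftarrow{\upsilon^+}Y^+)$ be sheaves on $\mathbb{P}^1$ over $R$, and let $f\colon Z\to Y$ be a homomorphism of $R[x,x^{-1}]$-modules. Suppose that $Z^-$ is finitely generated over $R[x^{-1}]$ and $Z^+$ is finitely generated over $R[x]$, and that $\upsilon^-$ and $\upsilon^+$ are injective. Then there exist integers $k,\ell\geq 0$, an $R[x^{-1}]$-linear map $f^-\colon Z^-\to Y^-$ and an $R[x]$-linear map $f^+\colon Z^+\to Y^+$ such that $f\circ\zeta^- = x^k\upsilon^-\circ f^-$ and $f\circ\zeta^+ = x^{-\ell}\upsilon^+\circ f^+$. In particular $(f^-,f,f^+)$ is a morphism of sheaves from $\mathcal{Z}$ to the twist $\mathcal{Y}(k+\ell) = (Y^-\xrightarrow{x^k\upsilon^-}Y\xleftarrow{x^{-\ell}\upsilon^+}Y^+)$.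
   Context: Modules are right modules. A sheaf on $\mathbb{P}^1$ over $R$ is a diagram $M^- \xrightarrow{\mu^-} M \xleftarrow{\mu^+} M^+$ where $M^-$ is an $R[x^{-1}]$-module, $M$ an $R[x,x^{-1}]$-module, $M^+$ an $R[x]$-module, $\mu^-$ is $R[x^{-1}]$-linear, $\mu^+$ is $R[x]$-linear, and the adjoint maps $M^-\otimes_{R[x^{-1}]}R[x,x^{-1}]\to M$ and $M^+\otimes_{R[x]}R[x,x^{-1}]\to M$ are isomorphisms; morphisms of sheaves are triples of linear maps compatible with the structure maps. For a sheaf $\mathcal{M}$ and integer $n$, a twist $\mathcal{M}(n)$ is any sheaf $M^-\xrightarrow{x^k\mu^-}M\xleftarrow{x^{-\ell}\mu^+}M^+$ with $k+\ell=n$. *)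

theory Defs
  imports Main
begin

text \<open>A right R[x]-module (resp. R[x^-1]-module) is a right R-module together with the
R-linear endomorphism T giving the action of x (resp. of x^-1); a right
R[x,x^-1]-module is one where that endomorphism (action of x) is bijective.\<close>

definition rmod :: "('m::ab_group_add \<Rightarrow> 'r::ring_1 \<Rightarrow> 'm) \<Rightarrow> bool" where
  "rmod sm \<longleftrightarrow>
     (\<forall>m n r. sm (m + n) r = sm m r + sm n r) \<and>
     (\<forall>m r s. sm m (r + s) = sm m r + sm m s) \<and>
     (\<forall>m r s. sm m (r * s) = sm (sm m r) s) \<and>
     (\<forall>m. sm m 1 = m)"

definition rlin :: "('a::ab_group_add \<Rightarrow> 'r::ring_1 \<Rightarrow> 'a) \<Rightarrow> ('b::ab_group_add \<Rightarrow> 'r \<Rightarrow> 'b)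
                    \<Rightarrow> ('a \<Rightarrow> 'b) \<Rightarrow> bool" where
  "rlin sa sb f \<longleftrightarrow> (\<forall>m n. f (m + n) = f m + f n) \<and> (\<forall>m r. f (sa m r) = sb (f m) r)"

definition polymod :: "('m::ab_group_add \<Rightarrow> 'r::ring_1 \<Rightarrow> 'm) \<Rightarrow> ('m \<Rightarrow> 'm) \<Rightarrow> bool" where
  "polymod sm T \<longleftrightarrow> rmod sm \<and> rlin sm sm T"

definition laurentmod :: "('m::ab_group_add \<Rightarrow> 'r::ring_1 \<Rightarrow> 'm) \<Rightarrow> ('m \<Rightarrow> 'm) \<Rightarrow> bool" where
  "laurentmod sm X \<longleftrightarrow> polymod sm X \<and> bij X"

definition polylin :: "('a::ab_group_add \<Rightarrow> 'r::ring_1 \<Rightarrow> 'a) \<Rightarrow> ('a \<Rightarrow> 'a)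
                       \<Rightarrow> ('b::ab_group_add \<Rightarrow> 'r \<Rightarrow> 'b) \<Rightarrow> ('b \<Rightarrow> 'b) \<Rightarrow> ('a \<Rightarrow> 'b) \<Rightarrow> bool" where
  "polylin sa Ta sb Tb f \<longleftrightarrow> rlin sa sb f \<and> (\<forall>m. f (Ta m) = Tb (f m))"

definition polyfg :: "('m::ab_group_add \<Rightarrow> 'r::ring_1 \<Rightarrow> 'm) \<Rightarrow> ('m \<Rightarrow> 'm) \<Rightarrow> bool" where
  "polyfg sm T \<longleftrightarrow> (\<exists>G. finite G \<and>
      (\<forall>m. \<exists>(c::'m \<Rightarrow> nat \<Rightarrow> 'r) d. m = (\<Sum>g\<in>G. \<Sum>i<d. sm ((T ^^ i) g) (c g i))))"

text \<open>The adjoint map  N \<otimes>_{R[t]} R[t,t^-1] \<rightarrow> M  of an R[t]-linear map mu : N \<rightarrow> M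
  (T = action of t on N, U = action of t on M, bijective) is bijective.
  Since t is central, N \<otimes>_{R[t]} R[t,t^-1] is the localisation of N at the powers of t,
  whose elements are the fractions n \<otimes> t^-k, with n \<otimes> t^-k = n' \<otimes> t^-k' iff
  T^(k'+j) n = T^(k+j) n' for some j; the adjoint sends n \<otimes> t^-k to U^-k (mu n).\<close>
definition adjoint_bij :: "('n \<Rightarrow> 'n) \<Rightarrow> ('m \<Rightarrow> 'm) \<Rightarrow> ('n \<Rightarrow> 'm) \<Rightarrow> bool" where
  "adjoint_bij T U mu \<longleftrightarrow>
     (\<forall>y. \<exists>n k. (U ^^ k) y = mu n) \<and>
     (\<forall>n n' k k'. (U ^^ k') (mu n) = (U ^^ k) (mu n') \<longrightarrow>
                  (\<exists>j. (T ^^ (k' + j)) n = (T ^^ (k + j)) n'))"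

text \<open>A sheaf on P^1 over R:  M^- --mu^- --> M <-- mu^+ -- M^+ .
  smm, Sm: right R-action and action of x^-1 on M^-;
  sm, X: right R-action and action of x on M;
  smp, Tp: right R-action and action of x on M^+.\<close>
definition is_sheaf ::
  "('mm::ab_group_add \<Rightarrow> 'r::ring_1 \<Rightarrow> 'mm) \<Rightarrow> ('mm \<Rightarrow> 'mm) \<Rightarrow> ('mm \<Rightarrow> 'm)
   \<Rightarrow> ('m::ab_group_add \<Rightarrow> 'r \<Rightarrow> 'm) \<Rightarrow> ('m \<Rightarrow> 'm)
   \<Rightarrow> ('mp::ab_group_add \<Rightarrow> 'r \<Rightarrow> 'mp) \<Rightarrow> ('mp \<Rightarrow> 'mp) \<Rightarrow> ('mp \<Rightarrow> 'm) \<Rightarrow> bool" where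
  "is_sheaf smm Sm mum sm X smp Tp mup \<longleftrightarrow>
     polymod smm Sm \<and> laurentmod sm X \<and> polymod smp Tp \<and>
     polylin smm Sm sm (inv X) mum \<and> polylin smp Tp sm X mup \<and>
     adjoint_bij Sm (inv X) mum \<and> adjoint_bij Tp X mup"

end

theory Submission
  imports Defs
begin

text \<open>Since Z^- is finitely generated over R[x^{-1}], a single power (x^{-1})^k moves the
  images of all generators, and hence the whole image of f \<circ> \<zeta>^-, into the submodule
  \<upsilon>^-(Y^-): every element of Y lands there after some power of x^{-1}, because the adjoint
  map of \<upsilon>^- is surjective. As \<upsilon>^- is injective, (x^{-1})^k \<circ> f \<circ> \<zeta>^- then factors
  through it as an R[x^{-1}]-linear map f^-. The chart at infinity is symmetric.\<close>

lemma additive_zero: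
  fixes g :: "'a::ab_group_add \<Rightarrow> 'b::ab_group_add"
  assumes "\<And>m n. g (m + n) = g m + g n"
  shows "g 0 = 0"
  by (metis assms add.right_neutral add_left_cancel)

lemma funpow_intertwine: "(\<And>n. g (T n) = U (g n)) \<Longrightarrow> g ((T ^^ k) n) = (U ^^ k) (g n)"
  by (induction k) auto

lemma funpow_left_inverse:
  fixes U V :: "'a \<Rightarrow> 'a"
  shows "(\<And>y. V (U y) = y) \<Longrightarrow> (V ^^ k) ((U ^^ k) y) = y"
proof (induction k arbitrary: y)
  case (Suc k)
  have "(V ^^ Suc k) ((U ^^ Suc k) y) = V ((V ^^ k) ((U ^^ k) (U y)))"
    by (simp add: funpow_swap1)
  then show ?case using Suc by simp
qed simp

lemma sum_closed:
  assumes "P 0" "\<And>a b. P a \<Longrightarrow> P b \<Longrightarrow> P (a + b)" "\<And>x. x \<in> A \<Longrightarrow> P (h x)"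
  shows "P (sum h A)"
proof (cases "finite A")
  case True
  then show ?thesis using assms(3)
    by (induction A rule: finite_induct) (auto intro: assms(1,2))
qed (simp add: assms(1))

lemma rlin_funpow: "rlin s s U \<Longrightarrow> rlin s s (U ^^ k)"
  by (induction k) (auto simp: rlin_def)

lemma rlin_inverse:
  assumes "rlin s s U" "\<And>y. U (V y) = y" "\<And>y. V (U y) = y"
  shows "rlin s s V"
  using assms unfolding rlin_def by metis

lemma polylin_comp:
  "polylin sa Ta sb Tb g \<Longrightarrow> polylin sb Tb sc Tc f \<Longrightarrow> polylin sa Ta sc Tc (f \<circ> g)"
  by (simp add: polylin_def rlin_def)

lemma polylin_inv:
  assumes "polylin sa X sb Y f" "bij X" "bij Y"
  shows "polylin sa (inv X) sb (inv Y) f"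
proof -
  have "f (inv X m) = inv Y (f m)" for m
    using assms by (metis bij_inv_eq_iff polylin_def)
  then show ?thesis using assms(1) by (simp add: polylin_def)
qed

lemma polylin_funpow_comp:
  assumes "polylin sa Ta sb U h" "rlin sb sb U"
  shows "polylin sa Ta sb U ((U ^^ k) \<circ> h)"
  using assms rlin_funpow[OF assms(2), of k]
  by (simp add: polylin_def rlin_def funpow_swap1)

lemma polylin_factor_through_inj:
  assumes h: "polylin sa Ta sy U h" and u: "polylin sb Tb sy U u" and "inj u"
    and "\<And>a. h a \<in> range u"
  shows "\<exists>g. polylin sa Ta sb Tb g \<and> (\<forall>a. u (g a) = h a)"
proof -
  define g where "g = inv u \<circ> h"
  have ug: "u (g a) = h a" for a
    using assms(4) by (auto simp: g_def f_inv_into_f)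
  have "g (a + b) = g a + g b" "g (sa a r) = sb (g a) r" "g (Ta a) = Tb (g a)" for a b r
    by (intro injD[OF \<open>inj u\<close>]; use h u ug in \<open>simp add: polylin_def rlin_def\<close>)+
  then have "polylin sa Ta sb Tb g"
    by (simp add: polylin_def rlin_def)
  with ug show ?thesis by blast
qed

lemma polylin_range_preimage_closed:
  assumes h: "polylin sa Ta sy U h" and u: "polylin sb Tb sy U u"
  shows "h 0 \<in> range u"
    and "h a \<in> range u \<Longrightarrow> h b \<in> range u \<Longrightarrow> h (a + b) \<in> range u"
    and "h a \<in> range u \<Longrightarrow> h (sa a r) \<in> range u"
    and "h a \<in> range u \<Longrightarrow> h (Ta a) \<in> range u"
proof -
  have hl: "rlin sa sy h" "\<And>a. h (Ta a) = U (h a)"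
    and ul: "rlin sb sy u" "\<And>b. u (Tb b) = U (u b)"
    using h u by (auto simp: polylin_def)
  have "h 0 = 0" "u 0 = 0"
    using hl(1) ul(1) additive_zero[of h] additive_zero[of u] unfolding rlin_def by blast+
  then show "h 0 \<in> range u" by (metis rangeI)
  show "h (a + b) \<in> range u" if ha: "h a \<in> range u" and hb: "h b \<in> range u" for a b
  proof -
    obtain x y where "h a = u x" "h b = u y" using ha hb by blast
    have "h (a + b) = u (x + y)"
      using hl(1) ul(1) \<open>h a = u x\<close> \<open>h b = u y\<close> by (simp add: rlin_def)
    then show ?thesis by simp
  qed
  show "h (sa a r) \<in> range u" if ha: "h a \<in> range u" for a r
  proof -
    obtain x where "h a = u x" using ha by blast
    have "h (sa a r) = u (sb x r)"
      using hl(1) ul(1) \<open>h a = u x\<close> by (simp add: rlin_def)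
    then show ?thesis by simp
  qed
  show "h (Ta a) \<in> range u" if ha: "h a \<in> range u" for a
  proof -
    obtain x where "h a = u x" using ha by blast
    have "h (Ta a) = u (Tb x)"
      using hl(2) ul(2) \<open>h a = u x\<close> by simp
    then show ?thesis by simp
  qed
qed

lemma polyfg_generators_induct:
  assumes span: "\<And>m. \<exists>c d. m = (\<Sum>g\<in>G. \<Sum>i<d. sm ((T ^^ i) g) (c g i))"
    and zero: "P 0" and add: "\<And>a b. P a \<Longrightarrow> P b \<Longrightarrow> P (a + b)"
    and scal: "\<And>a r. P a \<Longrightarrow> P (sm a r)" and shift: "\<And>a. P a \<Longrightarrow> P (T a)"
    and gen: "\<And>g. g \<in> G \<Longrightarrow> P g"
  shows "P m"
proof -
  have shifts: "P ((T ^^ i) g)" if "g \<in> G" for g i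
    using gen[OF that] by (induction i) (auto intro: shift)
  obtain c d where "m = (\<Sum>g\<in>G. \<Sum>i<d. sm ((T ^^ i) g) (c g i))"
    using span by blast
  also have "P \<dots>"
    using zero add scal shifts by (intro sum_closed[where P = P]) auto
  finally show ?thesis .
qed

lemma polyfg_funpow_into_range:
  assumes "polyfg sa Ta" and h: "polylin sa Ta sy U h" and U: "rlin sy sy U"
    and u: "polylin sb Tb sy U u" and reach: "\<And>y. \<exists>b k. (U ^^ k) y = u b"
  shows "\<exists>K. \<forall>a. (U ^^ K) (h a) \<in> range u"
proof -
  obtain G where "finite G"
    and span: "\<And>m. \<exists>c d. m = (\<Sum>g\<in>G. \<Sum>i<d. sa ((Ta ^^ i) g) (c g i))"
    using \<open>polyfg sa Ta\<close> unfolding polyfg_def by auto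
  have "\<forall>g. \<exists>k. (U ^^ k) (h g) \<in> range u"
  proof
    fix g
    obtain b k where "(U ^^ k) (h g) = u b" using reach by blast
    then show "\<exists>k. (U ^^ k) (h g) \<in> range u" by auto
  qed
  then obtain k where k: "\<forall>g. (U ^^ k g) (h g) \<in> range u"
    by (rule choice[THEN exE])
  define K where "K = Max (k ` G)"
  have gen: "(U ^^ K) (h g) \<in> range u" if "g \<in> G" for g
  proof -
    obtain b where b: "(U ^^ k g) (h g) = u b" using k by blast
    have "k g \<le> K" using that \<open>finite G\<close> by (simp add: K_def)
    then have "U ^^ K = U ^^ (K - k g) \<circ> U ^^ k g"
      by (simp flip: funpow_add)
    then have "(U ^^ K) (h g) = (U ^^ (K - k g)) ((U ^^ k g) (h g))"
      by simp
    also have "\<dots> = (U ^^ (K - k g)) (u b)"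
      using b by simp
    also have "\<dots> = u ((Tb ^^ (K - k g)) b)"
      by (rule funpow_intertwine[symmetric]) (use u in \<open>simp add: polylin_def\<close>)
    finally show ?thesis by simp
  qed
  note closed = polylin_range_preimage_closed[OF polylin_funpow_comp[OF h U, of K] u,
      unfolded comp_apply]
  have "(U ^^ K) (h a) \<in> range u" for a
    by (rule polyfg_generators_induct[OF span, where P = "\<lambda>a. (U ^^ K) (h a) \<in> range u"])
      (auto intro: closed gen)
  then show ?thesis by blast
qed

lemma polyfg_factor_after_funpow:
  assumes "polyfg sa Ta" and h: "polylin sa Ta sy U h" and U: "rlin sy sy U"
    and u: "polylin sb Tb sy U u" "inj u" and reach: "\<And>y. \<exists>b k. (U ^^ k) y = u b"
  shows "\<exists>K g. polylin sa Ta sb Tb g \<and> (\<forall>a. u (g a) = (U ^^ K) (h a))"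
proof -
  obtain K where "\<And>a. ((U ^^ K) \<circ> h) a \<in> range u"
    using polyfg_funpow_into_range[OF \<open>polyfg sa Ta\<close> h U u(1) reach] by auto
  from polylin_factor_through_inj[OF polylin_funpow_comp[OF h U] u this]
  show ?thesis by auto
qed

theorem mainTheorem6:
  fixes smZm :: "'zm::ab_group_add \<Rightarrow> 'r::ring_1 \<Rightarrow> 'zm" and SZ :: "'zm \<Rightarrow> 'zm"
    and zetam :: "'zm \<Rightarrow> 'z::ab_group_add"
    and smZ :: "'z \<Rightarrow> 'r \<Rightarrow> 'z" and XZ :: "'z \<Rightarrow> 'z"
    and smZp :: "'zp::ab_group_add \<Rightarrow> 'r \<Rightarrow> 'zp" and TZ :: "'zp \<Rightarrow> 'zp"
    and zetap :: "'zp \<Rightarrow> 'z"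
    and smYm :: "'ym::ab_group_add \<Rightarrow> 'r \<Rightarrow> 'ym" and SY :: "'ym \<Rightarrow> 'ym"
    and upsm :: "'ym \<Rightarrow> 'y::ab_group_add"
    and smY :: "'y \<Rightarrow> 'r \<Rightarrow> 'y" and XY :: "'y \<Rightarrow> 'y"
    and smYp :: "'yp::ab_group_add \<Rightarrow> 'r \<Rightarrow> 'yp" and TY :: "'yp \<Rightarrow> 'yp"
    and upsp :: "'yp \<Rightarrow> 'y"
    and f :: "'z \<Rightarrow> 'y"
  assumes Zsheaf: "is_sheaf smZm SZ zetam smZ XZ smZp TZ zetap"
    and Ysheaf: "is_sheaf smYm SY upsm smY XY smYp TY upsp"
    and f_lin: "polylin smZ XZ smY XY f"
    and Zm_fg: "polyfg smZm SZ"
    and Zp_fg: "polyfg smZp TZ"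
    and upsm_inj: "inj upsm"
    and upsp_inj: "inj upsp"
  shows "\<exists>(k::nat) (l::nat) (fm :: 'zm \<Rightarrow> 'ym) (fp :: 'zp \<Rightarrow> 'yp).
           polylin smZm SZ smYm SY fm \<and> polylin smZp TZ smYp TY fp \<and>
           (\<forall>z. f (zetam z) = (XY ^^ k) (upsm (fm z))) \<and>
           (\<forall>z. f (zetap z) = (inv XY ^^ l) (upsp (fp z)))"
proof -
  have "bij XZ" "bij XY" and XY_lin: "rlin smY smY XY"
    using Zsheaf Ysheaf by (auto simp: is_sheaf_def laurentmod_def polymod_def)
  then have XY_inv: "\<And>y. XY (inv XY y) = y" "\<And>y. inv XY (XY y) = y"
    by (simp_all add: bij_is_surj surj_f_inv_f bij_is_inj)
  have "polylin smZm SZ smY (inv XY) (f \<circ> zetam)"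
    using Zsheaf polylin_inv[OF f_lin \<open>bij XZ\<close> \<open>bij XY\<close>]
    by (auto simp: is_sheaf_def intro: polylin_comp)
  moreover have "polylin smYm SY smY (inv XY) upsm" "\<And>y. \<exists>b k. (inv XY ^^ k) y = upsm b"
    using Ysheaf by (auto simp: is_sheaf_def adjoint_bij_def)
  ultimately obtain k fm where fm: "polylin smZm SZ smYm SY fm"
    and "\<forall>z. upsm (fm z) = (inv XY ^^ k) (f (zetam z))"
    using polyfg_factor_after_funpow[OF Zm_fg _ rlin_inverse[OF XY_lin XY_inv] _ upsm_inj]
    by force
  then have fm_eq: "\<forall>z. f (zetam z) = (XY ^^ k) (upsm (fm z))"
    using funpow_left_inverse[of XY "inv XY"] XY_inv by simp
  have "polylin smZp TZ smY XY (f \<circ> zetap)"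
    using Zsheaf f_lin by (auto simp: is_sheaf_def intro: polylin_comp)
  moreover have "polylin smYp TY smY XY upsp" "\<And>y. \<exists>b k. (XY ^^ k) y = upsp b"
    using Ysheaf by (auto simp: is_sheaf_def adjoint_bij_def)
  ultimately obtain l fp where fp: "polylin smZp TZ smYp TY fp"
    and "\<forall>z. upsp (fp z) = (XY ^^ l) (f (zetap z))"
    using polyfg_factor_after_funpow[OF Zp_fg _ XY_lin _ upsp_inj] by force
  then have "\<forall>z. f (zetap z) = (inv XY ^^ l) (upsp (fp z))"
    using funpow_left_inverse[of "inv XY" XY] XY_inv by simp
  with fm fm_eq fp show ?thesis by blast
qed

end
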